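(* Let $\Sigma$ be a symmetric invertible $p\times p$ matrix, $\mathbf b\in\mathbb R^p$, $\boldsymbol\theta=\Sigma^{-1}\mathbf b$, let $\hat S_n$ be any $p\times p$ matrix and $\hat{\mathbf b}\in\mathbb R^p$, and let $\lambda\ge|\boldsymbol\theta|_1|\hat S_n-\Sigma|_\infty+|\hat{\mathbf b}-\mathbf b|_\infty$. Then $|\hat S_n\boldsymbol\theta-\hat{\mathbf b}|_\infty\le\lambda$, and every solution $\hat{\boldsymbol\theta}$ of $\min_{\boldsymbol\eta\in\mathbb R^p}\{|\boldsymbol\eta|_1:|\hat S_n\boldsymbol\eta-\hat{\mathbf b}|_\infty\le\lambda\}$ satisfies, for all $1\le w\le\infty$, $$|\hat{\boldsymbol\theta}-\boldsymbol\theta|_w\le\big[6D(5\lambda|\Sigma^{-1}|_{L^1})\big]^{1/w}\big(2\lambda|\Sigma^{-1}|_{L^1}\big)^{1-1/w}.$$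
   Context: $|M|_\infty=\max_{j,k}|m_{jk}|$ for a matrix $M$; $|M|_{L^1}=\max_k\sum_j|m_{jk}|$; $|\mathbf a|_w=(\sum_j|a_j|^w)^{1/w}$, $|\mathbf a|_\infty=\max_j|a_j|$; $D(u)=\sum_{j=1}^p(|\theta_j|\wedge u)$ for $u\ge0$. *)

theory Defs
  imports "HOL-Analysis.Analysis"
begin

text \<open>Vectors in R^p are real^'p, p x p matrices are real^'p^'p with M $ j $ k the entry
  in row j, column k.\<close>

definition vec_linf :: "real^'p \<Rightarrow> real" where
  "vec_linf a = Max {\<bar>a $ j\<bar> | j. True}"

definition vec_l1 :: "real^'p \<Rightarrow> real" where
  "vec_l1 a = (\<Sum>j\<in>UNIV. \<bar>a $ j\<bar>)"

definition vec_lw :: "real \<Rightarrow> real^'p \<Rightarrow> real" where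
  "vec_lw w a = (\<Sum>j\<in>UNIV. \<bar>a $ j\<bar> powr w) powr (1 / w)"

definition mat_maxabs :: "real^'p^'p \<Rightarrow> real" where
  "mat_maxabs M = Max {\<bar>M $ j $ k\<bar> | j k. True}"

definition mat_L1 :: "real^'p^'p \<Rightarrow> real" where
  "mat_L1 M = Max {(\<Sum>j\<in>UNIV. \<bar>M $ j $ k\<bar>) | k. True}"

definition Dfun :: "real^'p \<Rightarrow> real \<Rightarrow> real" where
  "Dfun \<theta> u = (\<Sum>j\<in>UNIV. min \<bar>\<theta> $ j\<bar> u)"

text \<open>Real power of a nonnegative base with the convention x^0 = 1 (also for x = 0).\<close>
definition rpow :: "real \<Rightarrow> real \<Rightarrow> real" where
  "rpow x a = (if a = 0 then 1 else x powr a)"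

end

theory Submission
  imports Defs
begin

text \<open>The truth \<open>\<theta>\<close> is feasible for the Dantzig-type program, so the minimiser \<open>\<theta>h\<close> has
  \<open>|\<theta>h|\<^sub>1 \<le> |\<theta>|\<^sub>1\<close> and, by the triangle inequality through \<open>\<Sigma>\<theta>h - b = (S\<theta>h - bh) - (S - \<Sigma>)\<theta>h + (bh - b)\<close>,
  \<open>|\<Sigma>(\<theta>h - \<theta>)|\<^sub>\<infinity> \<le> 2\<lambda>\<close>. Applying the symmetric \<open>\<Sigma>\<^sup>-\<^sup>1\<close> gives the sup-norm bound \<open>d = 2\<lambda>|\<Sigma>\<^sup>-\<^sup>1|\<^sub>L\<^sub>1\<close>.
  Coordinatewise, \<open>|h\<^sub>j| \<le> |\<theta>\<^sub>j + h\<^sub>j| - |\<theta>\<^sub>j| + 2 min(|\<theta>\<^sub>j|, d)\<close> whenever \<open>|h\<^sub>j| \<le> d\<close>; summing and using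
  \<open>|\<theta>h|\<^sub>1 \<le> |\<theta>|\<^sub>1\<close> bounds the \<open>\<ell>\<^sub>1\<close> error by \<open>2D(d)\<close>. The \<open>\<ell>\<^sub>w\<close> bound interpolates between the two,
  since \<open>\<Sum> |h\<^sub>j|\<^sup>w \<le> |h|\<^sub>1 |h|\<^sub>\<infinity>\<^sup>w\<^sup>-\<^sup>1\<close>.\<close>

lemma finite_range_curried: "finite {f j k | (j::'a::finite) (k::'b::finite). True}"
proof -
  have "{f j k | j k. True} = case_prod f ` UNIV" by auto
  then show ?thesis by simp
qed

lemma vec_linf_ge: "\<bar>a $ j\<bar> \<le> vec_linf a"
  unfolding vec_linf_def by (rule Max_ge) (auto simp: full_SetCompr_eq)

lemma vec_linf_le: "(\<And>j. \<bar>a $ j\<bar> \<le> c) \<Longrightarrow> vec_linf a \<le> c"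
  unfolding vec_linf_def by (subst Max_le_iff) (auto simp: full_SetCompr_eq)

lemma vec_linf_nonneg: "0 \<le> vec_linf a"
  using vec_linf_ge[of a undefined] by linarith

lemma vec_linf_minus_commute: "vec_linf (a - b) = vec_linf (b - a)"
  unfolding vec_linf_def by (simp add: abs_minus_commute)

lemma vec_linf_zero [simp]: "vec_linf 0 = 0"
  unfolding vec_linf_def by simp

lemma vec_l1_nonneg: "0 \<le> vec_l1 a"
  unfolding vec_l1_def by (simp add: sum_nonneg)

lemma mat_maxabs_ge: "\<bar>M $ j $ k\<bar> \<le> mat_maxabs M"
  unfolding mat_maxabs_def
  by (rule Max_ge) (auto intro: finite_range_curried[of "\<lambda>j k. \<bar>M $ j $ k\<bar>", simplified])

lemma mat_maxabs_nonneg: "0 \<le> mat_maxabs M"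
  using mat_maxabs_ge[of M undefined undefined] by linarith

lemma mat_maxabs_minus_commute: "mat_maxabs (A - B) = mat_maxabs (B - A)"
  unfolding mat_maxabs_def by (simp add: abs_minus_commute)

lemma mat_L1_ge: "(\<Sum>j\<in>UNIV. \<bar>M $ j $ k\<bar>) \<le> mat_L1 M"
  unfolding mat_L1_def by (rule Max_ge) (auto simp: full_SetCompr_eq)

lemma mat_L1_nonneg: "0 \<le> mat_L1 M"
  using mat_L1_ge[of M undefined] sum_nonneg[of UNIV "\<lambda>j. \<bar>M $ j $ undefined\<bar>"]
  by (meson abs_ge_zero order_trans)

lemma vec_linf_matrix_vector_mult_le: "vec_linf (M *v x) \<le> mat_maxabs M * vec_l1 x"
proof (rule vec_linf_le)
  fix i
  have "\<bar>(M *v x) $ i\<bar> \<le> (\<Sum>k\<in>UNIV. \<bar>M $ i $ k\<bar> * \<bar>x $ k\<bar>)"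
    unfolding matrix_vector_mult_def by (simp add: order_trans[OF sum_abs] abs_mult)
  also have "\<dots> \<le> (\<Sum>k\<in>UNIV. mat_maxabs M * \<bar>x $ k\<bar>)"
    by (rule sum_mono) (simp add: mat_maxabs_ge mult_right_mono)
  also have "\<dots> = mat_maxabs M * vec_l1 x"
    by (simp add: vec_l1_def sum_distrib_left)
  finally show "\<bar>(M *v x) $ i\<bar> \<le> mat_maxabs M * vec_l1 x" .
qed

lemma vec_linf_symmetric_matrix_vector_mult_le:
  assumes "transpose M = M"
  shows "vec_linf (M *v x) \<le> mat_L1 M * vec_linf x"
proof (rule vec_linf_le)
  fix i
  have sym: "M $ i $ k = M $ k $ i" for k
    using assms by (metis transpose_def vec_lambda_beta)
  have "\<bar>(M *v x) $ i\<bar> \<le> (\<Sum>k\<in>UNIV. \<bar>M $ k $ i\<bar> * \<bar>x $ k\<bar>)"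
    unfolding matrix_vector_mult_def by (simp add: order_trans[OF sum_abs] abs_mult sym)
  also have "\<dots> \<le> (\<Sum>k\<in>UNIV. \<bar>M $ k $ i\<bar>) * vec_linf x"
    unfolding sum_distrib_right by (rule sum_mono) (simp add: vec_linf_ge mult_left_mono)
  also have "\<dots> \<le> mat_L1 M * vec_linf x"
    by (rule mult_right_mono[OF mat_L1_ge vec_linf_nonneg])
  finally show "\<bar>(M *v x) $ i\<bar> \<le> mat_L1 M * vec_linf x" .
qed

lemma
  fixes A :: "'a::semiring_1^'n^'n"
  assumes "invertible A"
  shows matrix_mul_matrix_inv: "A ** matrix_inv A = mat 1"
    and matrix_inv_matrix_mul: "matrix_inv A ** A = mat 1"
  using someI_ex[OF assms[unfolded invertible_def]] unfolding matrix_inv_def by auto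

lemma symmetric_matrix_inv:
  fixes A :: "'a::comm_semiring_1^'n^'n"
  assumes "invertible A" and "transpose A = A"
  shows "transpose (matrix_inv A) = matrix_inv A"
proof -
  let ?B = "matrix_inv A"
  have left_inv: "transpose ?B ** A = mat 1"
    by (metis assms(2) matrix_mul_matrix_inv[OF assms(1)] matrix_transpose_mul transpose_mat)
  have "transpose ?B = (transpose ?B ** A) ** ?B"
    by (metis matrix_mul_matrix_inv[OF assms(1)] matrix_mul_assoc matrix_mul_rid)
  then show ?thesis
    using left_inv by (simp add: matrix_mul_lid)
qed

lemma vec_linf_residual_perturb:
  "vec_linf (A *v x - c) \<le> vec_linf (B *v x - d) + mat_maxabs (A - B) * vec_l1 x + vec_linf (c - d)"
proof (rule vec_linf_le)
  fix j
  have "(A *v x - c) $ j = (B *v x - d) $ j + ((A - B) *v x) $ j - (c - d) $ j"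
    by (simp add: matrix_vector_mult_diff_rdistrib)
  then have "\<bar>(A *v x - c) $ j\<bar> \<le> \<bar>(B *v x - d) $ j\<bar> + \<bar>((A - B) *v x) $ j\<bar> + \<bar>(c - d) $ j\<bar>"
    by linarith
  also have "\<dots> \<le> vec_linf (B *v x - d) + vec_linf ((A - B) *v x) + vec_linf (c - d)"
    by (intro add_mono vec_linf_ge)
  finally show "\<bar>(A *v x - c) $ j\<bar> \<le> vec_linf (B *v x - d) + mat_maxabs (A - B) * vec_l1 x + vec_linf (c - d)"
    using vec_linf_matrix_vector_mult_le[of "A - B" x] by linarith
qed

lemma dantzig_truth_feasible:
  assumes "\<Sigma> *v \<theta> = b"
    and "vec_l1 \<theta> * mat_maxabs (S - \<Sigma>) + vec_linf (bh - b) \<le> lam"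
  shows "vec_linf (S *v \<theta> - bh) \<le> lam"
  using vec_linf_residual_perturb[of S \<theta> bh \<Sigma> b] assms by (simp add: mult.commute)

lemma dantzig_residual_bound:
  assumes "\<Sigma> *v \<theta> = b"
    and lam: "vec_l1 \<theta> * mat_maxabs (S - \<Sigma>) + vec_linf (bh - b) \<le> lam"
    and feasible: "vec_linf (S *v \<eta> - bh) \<le> lam"
    and sparser: "vec_l1 \<eta> \<le> vec_l1 \<theta>"
  shows "vec_linf (\<Sigma> *v (\<eta> - \<theta>)) \<le> 2 * lam"
proof -
  have "vec_linf (\<Sigma> *v (\<eta> - \<theta>)) = vec_linf (\<Sigma> *v \<eta> - b)"
    using assms(1) by (simp add: matrix_vector_mult_diff_distrib)
  also have "\<dots> \<le> vec_linf (S *v \<eta> - bh) + mat_maxabs (S - \<Sigma>) * vec_l1 \<eta> + vec_linf (bh - b)"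
    using vec_linf_residual_perturb[of \<Sigma> \<eta> b S bh]
    by (simp add: mat_maxabs_minus_commute vec_linf_minus_commute)
  also have "\<dots> \<le> lam + mat_maxabs (S - \<Sigma>) * vec_l1 \<theta> + vec_linf (bh - b)"
    using feasible mult_left_mono[OF sparser mat_maxabs_nonneg[of "S - \<Sigma>"]] by linarith
  finally show ?thesis
    using lam by (simp add: mult.commute)
qed

lemma vec_linf_le_via_symmetric_inverse:
  fixes \<Sigma> :: "real^'p^'p"
  assumes "transpose \<Sigma> = \<Sigma>" and "invertible \<Sigma>" and "vec_linf (\<Sigma> *v h) \<le> r"
  shows "vec_linf h \<le> mat_L1 (matrix_inv \<Sigma>) * r"
proof -
  have "h = matrix_inv \<Sigma> *v (\<Sigma> *v h)"
    by (simp add: matrix_vector_mul_assoc matrix_inv_matrix_mul[OF assms(2)])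
  then have "vec_linf h \<le> mat_L1 (matrix_inv \<Sigma>) * vec_linf (\<Sigma> *v h)"
    using vec_linf_symmetric_matrix_vector_mult_le[OF symmetric_matrix_inv[OF assms(2,1)]]
    by metis
  also have "\<dots> \<le> mat_L1 (matrix_inv \<Sigma>) * r"
    by (rule mult_left_mono[OF assms(3) mat_L1_nonneg])
  finally show ?thesis .
qed

lemma Dfun_nonneg: "0 \<le> u \<Longrightarrow> 0 \<le> Dfun \<theta> u"
  unfolding Dfun_def by (rule sum_nonneg) auto

lemma Dfun_mono: "u \<le> v \<Longrightarrow> Dfun \<theta> u \<le> Dfun \<theta> v"
  unfolding Dfun_def by (rule sum_mono) auto

lemma abs_le_abs_add_diff_min:
  fixes t h d :: real
  assumes "\<bar>h\<bar> \<le> d"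
  shows "\<bar>h\<bar> \<le> \<bar>t + h\<bar> - \<bar>t\<bar> + 2 * min \<bar>t\<bar> d"
  using assms by (auto simp: min_def abs_if)

lemma vec_l1_le_Dfun:
  assumes "vec_linf h \<le> d" and "vec_l1 (\<theta> + h) \<le> vec_l1 \<theta>"
  shows "vec_l1 h \<le> 2 * Dfun \<theta> d"
proof -
  have "vec_l1 h \<le> (\<Sum>j\<in>UNIV. \<bar>(\<theta> + h) $ j\<bar> - \<bar>\<theta> $ j\<bar> + 2 * min \<bar>\<theta> $ j\<bar> d)"
    unfolding vec_l1_def using order_trans[OF vec_linf_ge assms(1)]
    by (intro sum_mono) (simp add: abs_le_abs_add_diff_min)
  also have "\<dots> = vec_l1 (\<theta> + h) - vec_l1 \<theta> + 2 * Dfun \<theta> d"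
    by (simp add: vec_l1_def Dfun_def sum.distrib sum_subtractf sum_distrib_left)
  finally show ?thesis
    using assms(2) by linarith
qed

lemma sum_abs_powr_le:
  assumes "w \<ge> 1"
  shows "(\<Sum>j\<in>UNIV. \<bar>h $ j\<bar> powr w) \<le> vec_l1 h * vec_linf h powr (w - 1)"
proof -
  have "\<bar>h $ j\<bar> powr w \<le> \<bar>h $ j\<bar> * vec_linf h powr (w - 1)" for j
  proof (cases "h $ j = 0")
    case False
    have "\<bar>h $ j\<bar> powr w = \<bar>h $ j\<bar> powr 1 * \<bar>h $ j\<bar> powr (w - 1)"
      by (subst powr_add[symmetric]) simp
    also have "\<dots> = \<bar>h $ j\<bar> * \<bar>h $ j\<bar> powr (w - 1)"
      using False by simp
    also have "\<dots> \<le> \<bar>h $ j\<bar> * vec_linf h powr (w - 1)"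
      using assms vec_linf_ge[of h j] by (intro mult_left_mono powr_mono2) auto
    finally show ?thesis .
  qed simp
  then have "(\<Sum>j\<in>UNIV. \<bar>h $ j\<bar> powr w) \<le> (\<Sum>j\<in>UNIV. \<bar>h $ j\<bar> * vec_linf h powr (w - 1))"
    by (rule sum_mono)
  then show ?thesis
    by (simp add: vec_l1_def sum_distrib_right)
qed

lemma vec_lw_le_interpolation:
  assumes w: "w \<ge> 1" and linf: "vec_linf h \<le> d" and l1: "vec_l1 h \<le> E"
  shows "vec_lw w h \<le> rpow E (1 / w) * rpow d (1 - 1 / w)"
proof (cases "w = 1")
  case True
  then show ?thesis
    using l1 by (simp add: vec_lw_def vec_l1_def rpow_def sum_nonneg)
next
  case False
  have E: "0 \<le> E" and d: "0 \<le> d"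
    using l1 linf vec_l1_nonneg[of h] vec_linf_nonneg[of h] by linarith+
  have "(\<Sum>j\<in>UNIV. \<bar>h $ j\<bar> powr w) \<le> vec_l1 h * vec_linf h powr (w - 1)"
    by (rule sum_abs_powr_le[OF w])
  also have "\<dots> \<le> E * d powr (w - 1)"
    using w linf l1 E by (intro mult_mono powr_mono2) (auto simp: vec_linf_nonneg)
  finally have "vec_lw w h \<le> (E * d powr (w - 1)) powr (1 / w)"
    unfolding vec_lw_def using w by (intro powr_mono2) (auto intro: sum_nonneg)
  also have "\<dots> = E powr (1 / w) * d powr (1 - 1 / w)"
    using E d w False by (simp add: powr_mult powr_powr diff_divide_distrib)
  finally show ?thesis
    using w False by (simp add: rpow_def)
qed

theorem mainTheorem6:
  fixes \<Sigma> S :: "real^'p^'p" and b bh \<theta> :: "real^'p" and lam :: real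
  assumes symm: "transpose \<Sigma> = \<Sigma>"
    and inv: "invertible \<Sigma>"
    and theta: "\<theta> = matrix_inv \<Sigma> *v b"
    and lam_bd: "lam \<ge> vec_l1 \<theta> * mat_maxabs (S - \<Sigma>) + vec_linf (bh - b)"
  shows "vec_linf (S *v \<theta> - bh) \<le> lam \<and>
    (\<forall>\<theta>h :: real^'p.
       (vec_linf (S *v \<theta>h - bh) \<le> lam \<and>
        (\<forall>\<eta>. vec_linf (S *v \<eta> - bh) \<le> lam \<longrightarrow> vec_l1 \<theta>h \<le> vec_l1 \<eta>))
       \<longrightarrow>
       (\<forall>w::real. w \<ge> 1 \<longrightarrow>
          vec_lw w (\<theta>h - \<theta>) \<le>
            rpow (6 * Dfun \<theta> (5 * lam * mat_L1 (matrix_inv \<Sigma>))) (1 / w) *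
            rpow (2 * lam * mat_L1 (matrix_inv \<Sigma>)) (1 - 1 / w)) \<and>
       vec_linf (\<theta>h - \<theta>) \<le> 2 * lam * mat_L1 (matrix_inv \<Sigma>))"
proof -
  let ?L = "mat_L1 (matrix_inv \<Sigma>)"
  have truth: "\<Sigma> *v \<theta> = b"
    unfolding theta by (simp add: matrix_vector_mul_assoc matrix_mul_matrix_inv[OF inv])
  have truth_feasible: "vec_linf (S *v \<theta> - bh) \<le> lam"
    using dantzig_truth_feasible[OF truth lam_bd] .
  have L_lam: "0 \<le> lam * ?L"
    using truth_feasible vec_linf_nonneg mat_L1_nonneg by (meson order_trans mult_nonneg_nonneg)
  show ?thesis
  proof (intro conjI truth_feasible allI impI)
    fix \<theta>h :: "real^'p" and w :: real
    assume "vec_linf (S *v \<theta>h - bh) \<le> lam \<and>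
        (\<forall>\<eta>. vec_linf (S *v \<eta> - bh) \<le> lam \<longrightarrow> vec_l1 \<theta>h \<le> vec_l1 \<eta>)"
    then have feasible: "vec_linf (S *v \<theta>h - bh) \<le> lam" and sparser: "vec_l1 \<theta>h \<le> vec_l1 \<theta>"
      using truth_feasible by blast+
    show linf: "vec_linf (\<theta>h - \<theta>) \<le> 2 * lam * ?L"
      using vec_linf_le_via_symmetric_inverse[OF symm inv
          dantzig_residual_bound[OF truth lam_bd feasible sparser]] by (simp add: ac_simps)
    have "vec_l1 (\<theta>h - \<theta>) \<le> 2 * Dfun \<theta> (2 * lam * ?L)"
      using vec_l1_le_Dfun[OF linf] sparser by simp
    also have "\<dots> \<le> 6 * Dfun \<theta> (5 * lam * ?L)"
      using Dfun_mono[of "2 * lam * ?L" "5 * lam * ?L" \<theta>] Dfun_nonneg[of "5 * lam * ?L" \<theta>] L_lam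
      by simp
    finally have "vec_l1 (\<theta>h - \<theta>) \<le> 6 * Dfun \<theta> (5 * lam * ?L)" .
    moreover assume "w \<ge> 1"
    ultimately show "vec_lw w (\<theta>h - \<theta>) \<le>
        rpow (6 * Dfun \<theta> (5 * lam * ?L)) (1 / w) * rpow (2 * lam * ?L) (1 - 1 / w)"
      using vec_lw_le_interpolation linf by blast
  qed
qed

end
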